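(* In the BICM setting described in the context, with message $1$ transmitted and $\mathsf D$ the CDF-ORBGRAND metric, for any $w'\ne1$ and any $\theta<0$, almost surely $$\lim_{N\to\infty}\frac1N\ln\mathbb E\big\{e^{N\theta\mathsf D(w')}\,\big|\,\underline{\mathsf T}\big\}=\sum_{j=1}^m\mathbb E\Big[\ln\Big(1+e^{\frac\theta m|\ln(q_j^+(\mathsf Y)/q_j^-(\mathsf Y))|}\Big)\Big]-m\ln2.$$ Here, in the $j$-th term, $\mathsf Y$ has density $(q_j^++q_j^-)/2$.
   Context: Let $m\ge1$, let $\mathcal S$ be a constellation with $|\mathcal S|=2^m$, and let $\mu:\{+1,-1\}^m\to\mathcal S$ be a bijective labeling. For $s\in\mathcal S$, let $b_j(s)$ be the $j$-th coordinate of $\mu^{-1}(s)$. The channel is memoryless with output space $\mathbb R^d$ (norm $|\cdot|$) and transition densities $p(y\mid s)$. For $j=1,\dots,m$ define $$q_j^\pm(y)=2^{-(m-1)}\sum_{s:\,b_j(s)=\pm1}p(y\mid s).$$ For each $j$, let $\mathsf X_j$ be uniform on $\{\pm1\}$ and let $\mathsf Y$ have density $q_j^{\mathsf X_j}$ given $\mathsf X_j$. Let $\Psi_j$ be the CDF of $|\ln(q_j^+(\mathsf Y)/q_j^-(\mathsf Y))|$, and let $\bar\Psi=\frac1m\sum_j\Psi_j$. Assume that for each $j$: (A1) there exist $M_1>0$, $a>0$ and a polynomial $S_1$ with $q_j^\pm(y)<S_1(|y|)e^{-a|y|}$ for $|y|>M_1$; (A2) there exist $M_2>0$ and a polynomial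 $S_2$ with $|\ln(q_j^+(y)/q_j^-(y))|<S_2(|y|)$ for $|y|>M_2$; (A3) $\Psi_j$, $\Psi_j^{-1}$, $\bar\Psi$ and $\bar\Psi^{-1}$ are smooth with finite first, second and third derivatives. Random coding: the codebook has $\lceil e^{NR}\rceil$ codewords, each consisting of bits $\mathsf X_{i,j}(w)$, $i\le N$, $j\le m$, all i.i.d. uniform on $\{\pm1\}$. Message $1$ is transmitted. Symbol $i$ is $s_i(1)=\mu(\mathsf X_{i,1}(1),\dots,\mathsf X_{i,m}(1))$, and the outputs $\mathsf Y_i$ are conditionally independent with densities $p(\cdot\mid s_i(1))$. Let $\mathsf T_{i,j}=\ln(q_j^+(\mathsf Y_i)/q_j^-(\mathsf Y_i))$, and let $\underline{\mathsf T}$ be the collection of all $\mathsf T_{i,j}$. Let $\mathsf R_{i,j}$ be the rank of $|\mathsf T_{i,j}|$ among all $mN$ values (rank $1$ is the smallest). Let $\mathrm{sgn}(t)=1$ if $t\ge0$ and $-1$ otherwise. The CDF-ORBGRAND metric is $$\mathsf D(w)=\frac1{mN}\sum_{i,j}\bar\Psi^{-1}\Big(\frac{\mathsf R_{i,j}}{mN+1}\Big)\mathbf 1\big(\mathrm{sgn}(\mathsf T_{i,j})\mathsf X_{i,j}(w)<0\big).$$ *)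

theory Defs
  imports "HOL-Probability.Probability" "HOL-Computational_Algebra.Polynomial"
begin

definition label_set :: "nat \<Rightarrow> (nat \<Rightarrow> real) set" where
  "label_set m = PiE {1..m} (\<lambda>_. {-1, 1})"

definition bitlab :: "nat \<Rightarrow> ((nat \<Rightarrow> real) \<Rightarrow> 's) \<Rightarrow> 's \<Rightarrow> nat \<Rightarrow> real" where
  "bitlab m mu s j = inv_into (label_set m) mu s j"

definition qbit :: "nat \<Rightarrow> ((nat \<Rightarrow> real) \<Rightarrow> 's) \<Rightarrow> 's set \<Rightarrow> ('s \<Rightarrow> 'y \<Rightarrow> real)
    \<Rightarrow> nat \<Rightarrow> real \<Rightarrow> 'y \<Rightarrow> real" where
  "qbit m mu S p j \<sigma> y = (1 / 2 ^ (m - 1)) * (\<Sum>s\<in>{s\<in>S. bitlab m mu s j = \<sigma>}. p s y)"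

definition llr :: "nat \<Rightarrow> ((nat \<Rightarrow> real) \<Rightarrow> 's) \<Rightarrow> 's set \<Rightarrow> ('s \<Rightarrow> 'y \<Rightarrow> real)
    \<Rightarrow> nat \<Rightarrow> 'y \<Rightarrow> real" where
  "llr m mu S p j y = ln (qbit m mu S p j 1 y / qbit m mu S p j (-1) y)"

text \<open>Psi_j: CDF of |ln(q_j^+(Y)/q_j^-(Y))| where X_j is uniform on {+1,-1} and Y has
  density q_j^{X_j} given X_j, i.e. Y has density (q_j^+ + q_j^-)/2.\<close>
definition Psi :: "nat \<Rightarrow> ((nat \<Rightarrow> real) \<Rightarrow> 's) \<Rightarrow> 's set \<Rightarrow> ('s \<Rightarrow> 'y::euclidean_space \<Rightarrow> real)
    \<Rightarrow> nat \<Rightarrow> real \<Rightarrow> real" where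
  "Psi m mu S p j t =
     measure (density lborel (\<lambda>y. ennreal ((qbit m mu S p j 1 y + qbit m mu S p j (-1) y) / 2)))
       {y. \<bar>llr m mu S p j y\<bar> \<le> t}"

definition Psibar :: "nat \<Rightarrow> ((nat \<Rightarrow> real) \<Rightarrow> 's) \<Rightarrow> 's set \<Rightarrow> ('s \<Rightarrow> 'y::euclidean_space \<Rightarrow> real)
    \<Rightarrow> real \<Rightarrow> real" where
  "Psibar m mu S p t = (1 / real m) * (\<Sum>j=1..m. Psi m mu S p j t)"

definition cdf_core :: "(real \<Rightarrow> real) \<Rightarrow> real set" where
  "cdf_core F = {t. 0 < t \<and> 0 < F t \<and> F t < 1}"

definition cdf_inv :: "(real \<Rightarrow> real) \<Rightarrow> real \<Rightarrow> real" where
  "cdf_inv F = the_inv_into (cdf_core F) F"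

definition smooth_on :: "real set \<Rightarrow> (real \<Rightarrow> real) \<Rightarrow> bool" where
  "smooth_on S f \<longleftrightarrow> (\<forall>k. \<forall>x\<in>S. ((deriv ^^ k) f) field_differentiable (at x))"

definition A3 :: "(real \<Rightarrow> real) \<Rightarrow> bool" where
  "A3 F \<longleftrightarrow> bij_betw F (cdf_core F) {0<..<1} \<and> smooth_on {0<..} F \<and> smooth_on {0<..<1} (cdf_inv F)"

definition sgn1 :: "real \<Rightarrow> real" where
  "sgn1 t = (if t \<ge> 0 then 1 else -1)"

text \<open>Rank (1 = smallest) of v k among the values v k', k' in I; ties broken
  lexicographically by index (ties occur with probability zero in the intended setting).\<close>
definition rank :: "(nat \<times> nat) set \<Rightarrow> (nat \<times> nat \<Rightarrow> real) \<Rightarrow> nat \<times> nat \<Rightarrow> nat" where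
  "rank I v k = Suc (card {k'\<in>I. v k' < v k \<or>
      (v k' = v k \<and> (fst k' < fst k \<or> (fst k' = fst k \<and> snd k' < snd k)))})"

text \<open>CDF-ORBGRAND metric of the codeword with bits Wb (Wb i j = X_{i,j}(w')), given the
  LLRs T (T i j = T_{i,j}), for block length N.\<close>
definition orbgrand_metric :: "nat \<Rightarrow> (real \<Rightarrow> real) \<Rightarrow> nat \<Rightarrow> (nat \<Rightarrow> nat \<Rightarrow> real)
    \<Rightarrow> (nat \<Rightarrow> nat \<Rightarrow> real) \<Rightarrow> real" where
  "orbgrand_metric m Pbar N T Wb =
     (let I = {1..N} \<times> {1..m} in
      (1 / (real m * real N)) *
        (\<Sum>(i,j)\<in>I. cdf_inv Pbar (real (rank I (\<lambda>(i',j'). \<bar>T i' j'\<bar>) (i,j)) / (real m * real N + 1))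
                     * (if sgn1 (T i j) * Wb i j < 0 then 1 else 0)))"

end

theory Submission
  imports Defs
begin

(*
  A CDF-ORBGRAND metric sees the channel outputs only through the signs of the bit LLRs and
  through their ranks, and the ranks merely permute the fixed reliabilities
  cdf_inv Psibar (k / (mN + 1)), k = 1..mN.  Given the LLRs, the bits of a wrong codeword are
  uniform and independent of everything else, so each bit contributes a factor
  (1 + exp (theta/m r)) / 2 and the conditional moment generating function is the same
  deterministic product for almost every outcome.  Its normalised logarithm is m times a
  Riemann sum of the bounded antitone function u |-> ln ((1 + exp (theta/m cdf_inv Psibar u)) / 2),
  which tends to the integral over (0,1); by the quantile transform that integral is an
  expectation under the mixture of the laws of |ln (q_j^+ / q_j^-)|, whose CDF is Psibar.
*)

section \<open>Quantile transform\<close>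

lemma cdf_inv_mem_cdf_core:
  assumes "bij_betw F (cdf_core F) {0<..<1}" "u \<in> {0<..<1}"
  shows "cdf_inv F u \<in> cdf_core F" and "F (cdf_inv F u) = u"
proof -
  have inj: "inj_on F (cdf_core F)" and "u \<in> F ` cdf_core F"
    using assms unfolding bij_betw_def by simp_all
  then show "cdf_inv F u \<in> cdf_core F" and "F (cdf_inv F u) = u"
    unfolding cdf_inv_def by (simp_all add: the_inv_into_into f_the_inv_into_f)
qed

lemma cdf_zero_at_zero:
  assumes mono: "mono F" and neg: "\<And>t. t < 0 \<Longrightarrow> F t = 0"
    and bij: "bij_betw F (cdf_core F) {0<..<1}"
  shows "F 0 = 0"
proof (rule antisym)
  show "F 0 \<le> 0"
  proof (rule ccontr)
    assume "\<not> F 0 \<le> 0"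
    define v where "v = min (F 0 / 2) (1 / 2)"
    have v: "v \<in> {0<..<1}" "v < F 0"
      using \<open>\<not> F 0 \<le> 0\<close> by (auto simp: v_def)
    have "0 < cdf_inv F v"
      using cdf_inv_mem_cdf_core(1)[OF bij v(1)] by (simp add: cdf_core_def)
    then have "F 0 \<le> v"
      using monoD[OF mono, of 0 "cdf_inv F v"] cdf_inv_mem_cdf_core(2)[OF bij v(1)] by simp
    then show False
      using v(2) by simp
  qed
  show "0 \<le> F 0"
    using monoD[OF mono, of "-1" 0] neg[of "-1"] by simp
qed

lemma cdf_inv_le_iff:
  assumes mono: "mono F" and neg: "\<And>t. t < 0 \<Longrightarrow> F t = 0"
    and bij: "bij_betw F (cdf_core F) {0<..<1}" and u: "u \<in> {0<..<1}"
  shows "cdf_inv F u \<le> t \<longleftrightarrow> u \<le> F t"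
proof
  assume "cdf_inv F u \<le> t"
  then show "u \<le> F t"
    using monoD[OF mono] cdf_inv_mem_cdf_core(2)[OF bij u] by metis
next
  assume ut: "u \<le> F t"
  have core: "cdf_inv F u \<in> cdf_core F" and F_inv: "F (cdf_inv F u) = u"
    using cdf_inv_mem_cdf_core[OF bij u] by auto
  show "cdf_inv F u \<le> t"
  proof (rule ccontr)
    assume "\<not> cdf_inv F u \<le> t"
    then have "F t = u"
      using ut monoD[OF mono, of t "cdf_inv F u"] F_inv by simp
    moreover have "0 < t"
      using cdf_zero_at_zero[OF mono neg bij] \<open>F t = u\<close> u monoD[OF mono, of t 0] by (cases "t \<le> 0") auto
    ultimately have "t \<in> cdf_core F" and "F t = F (cdf_inv F u)"
      using u F_inv by (auto simp: cdf_core_def)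
    then have "t = cdf_inv F u"
      using bij core by (auto simp: bij_betw_def dest: inj_onD)
    then show False
      using \<open>\<not> cdf_inv F u \<le> t\<close> by simp
  qed
qed

lemma cdf_inv_mono:
  assumes "mono F" "\<And>t. t < 0 \<Longrightarrow> F t = 0" "bij_betw F (cdf_core F) {0<..<1}"
  shows "mono_on {0<..<1} (cdf_inv F)"
  by (rule mono_onI) (use assms cdf_inv_le_iff cdf_inv_mem_cdf_core(2) in \<open>metis order.trans\<close>)

lemma borel_measurable_cdf_inv:
  assumes "mono F" "\<And>t. t < 0 \<Longrightarrow> F t = 0" "bij_betw F (cdf_core F) {0<..<1}"
  shows "(\<lambda>u. indicator {0<..<1} u *\<^sub>R cdf_inv F u) \<in> borel_measurable borel"
  using borel_measurable_mono_on_fnc[OF cdf_inv_mono[OF assms]]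
  by (simp add: borel_measurable_restrict_space_iff)

lemma distr_uniform_cdf_inv:
  fixes \<mu> :: "real measure"
  assumes \<mu>: "real_distribution \<mu>" and F: "cdf \<mu> = F"
    and neg: "\<And>t. t < 0 \<Longrightarrow> F t = 0" and bij: "bij_betw F (cdf_core F) {0<..<1}"
  shows "distr (uniform_measure lborel {0<..<1}) borel (\<lambda>u. indicator {0<..<1} u *\<^sub>R cdf_inv F u) = \<mu>"
    (is "distr ?U borel ?Q = \<mu>")
proof -
  interpret real_distribution \<mu> by (fact \<mu>)
  have mono: "mono F"
    using cdf_nondecreasing F by (auto intro: monoI)
  have Q_borel: "?Q \<in> borel_measurable borel"
    using mono neg bij by (rule borel_measurable_cdf_inv)
  then have Q: "?Q \<in> borel_measurable ?U"
    by simp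
  moreover have "prob_space ?U"
    by (rule prob_space_uniform_measure) simp_all
  ultimately have "real_distribution (distr ?U borel ?Q)"
    using prob_space.prob_space_distr[of ?U ?Q borel]
    by (simp add: real_distribution_def real_distribution_axioms_def)
  moreover have "cdf (distr ?U borel ?Q) t = cdf \<mu> t" for t
  proof -
    have "{0<..<1} \<inter> ?Q -` {..t} = {0<..<1} \<inter> {..F t}"
      using cdf_inv_le_iff[OF mono neg bij] by auto
    moreover have "0 \<le> F t" "F t \<le> 1"
      using cdf_nonneg cdf_bounded_prob F by auto
    moreover have "{0<..<1} \<inter> {..F t} = (if F t < 1 then {0<..F t} else {0<..<1})"
      using \<open>F t \<le> 1\<close> by auto
    moreover have "?Q -` {..t} \<in> sets borel"
      using measurable_sets[OF Q_borel, of "{..t}"] by simp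
    ultimately show ?thesis
      using F Q by (simp add: cdf_def measure_distr)
  qed
  ultimately show ?thesis
    using cdf_unique \<mu> by blast
qed

lemma uniform_measure_unit_interval:
  "uniform_measure lborel {0<..<1::real} = density lborel (\<lambda>u. ennreal (indicator {0<..<1} u))"
  by (simp add: uniform_measure_def ennreal_indicator divide_ennreal_def)

lemma integral_cdf_inv:
  fixes \<mu> :: "real measure" and g :: "real \<Rightarrow> real"
  assumes "real_distribution \<mu>" "cdf \<mu> = F"
    and "\<And>t. t < 0 \<Longrightarrow> F t = 0" "bij_betw F (cdf_core F) {0<..<1}"
    and g[measurable]: "g \<in> borel_measurable borel"
  shows "(\<integral>x. g x \<partial>\<mu>) = (LBINT u:{0<..<1}. g (cdf_inv F u))"
proof -
  let ?Q = "\<lambda>u. indicator {0<..<1} u *\<^sub>R cdf_inv F u"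
  interpret real_distribution \<mu> by fact
  have "mono F"
    using cdf_nondecreasing assms(2) by (auto intro: monoI)
  then have Q[measurable]: "?Q \<in> borel_measurable borel"
    using assms(3,4) by (rule borel_measurable_cdf_inv)
  have "(\<integral>x. g x \<partial>\<mu>) = (\<integral>x. g x \<partial>distr (uniform_measure lborel {0<..<1}) borel ?Q)"
    using distr_uniform_cdf_inv[OF assms(1-4)] by simp
  also have "\<dots> = (\<integral>u. g (?Q u) \<partial>uniform_measure lborel {0<..<1})"
    by (rule integral_distr) (use Q in simp_all)
  also have "\<dots> = (LBINT u:{0<..<1}. g (cdf_inv F u))"
    unfolding uniform_measure_unit_interval set_lebesgue_integral_def using measurable_compose[OF Q g]
    by (subst integral_density) (auto intro!: Bochner_Integration.integral_cong simp: indicator_def)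
  finally show ?thesis .
qed

section \<open>Ranks and the ORBGRAND metric\<close>

definition rank_order :: "(nat \<times> nat \<Rightarrow> real) \<Rightarrow> nat \<times> nat \<Rightarrow> nat \<times> nat \<Rightarrow> bool" where
  "rank_order v a b \<longleftrightarrow>
     v a < v b \<or> (v a = v b \<and> (fst a < fst b \<or> (fst a = fst b \<and> snd a < snd b)))"

lemma rank_eq_card_rank_order: "rank I v k = Suc (card {k'\<in>I. rank_order v k' k})"
  unfolding rank_def rank_order_def by simp

lemma rank_order_trans: "rank_order v a b \<Longrightarrow> rank_order v b c \<Longrightarrow> rank_order v a c"
  unfolding rank_order_def by auto

lemma rank_order_irrefl: "\<not> rank_order v a a"
  unfolding rank_order_def by auto

lemma rank_order_total: "a \<noteq> b \<Longrightarrow> rank_order v a b \<or> rank_order v b a"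
  unfolding rank_order_def by (cases a; cases b) auto

lemma rank_strict_mono:
  assumes "finite I" "a \<in> I" "rank_order v a b"
  shows "rank I v a < rank I v b"
proof -
  have "{k'\<in>I. rank_order v k' a} \<subset> {k'\<in>I. rank_order v k' b}"
    using assms rank_order_trans rank_order_irrefl by blast
  then show ?thesis
    using assms(1) by (simp add: rank_eq_card_rank_order psubset_card_mono)
qed

lemma rank_le_card:
  assumes "finite I" "k \<in> I"
  shows "rank I v k \<le> card I"
proof -
  have "{k'\<in>I. rank_order v k' k} \<subseteq> I - {k}"
    using rank_order_irrefl by auto
  then have "card {k'\<in>I. rank_order v k' k} < card I"
    using assms by (meson card_Diff1_less card_mono finite_Diff le_less_trans)
  then show ?thesis by (simp add: rank_eq_card_rank_order)
qed

lemma bij_betw_rank: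
  assumes "finite I"
  shows "bij_betw (rank I v) I {1..card I}"
proof -
  have inj: "inj_on (rank I v) I"
    by (rule inj_onI, rule ccontr)
       (use assms rank_order_total rank_strict_mono in \<open>metis less_irrefl\<close>)
  have "rank I v ` I \<subseteq> {1..card I}"
    using assms rank_le_card by (auto simp: rank_eq_card_rank_order)
  moreover have "card (rank I v ` I) = card {1..card I}"
    using inj by (simp add: card_image)
  ultimately have "rank I v ` I = {1..card I}"
    by (intro card_subset_eq) auto
  then show ?thesis
    using inj by (simp add: bij_betw_def)
qed

lemma measurable_rank:
  assumes "finite I" "k \<in> I" "\<And>k'. k' \<in> I \<Longrightarrow> (\<lambda>\<omega>. v \<omega> k') \<in> borel_measurable M"
  shows "(\<lambda>\<omega>. rank I (v \<omega>) k) \<in> measurable M (count_space UNIV)"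
proof -
  have "rank I (v \<omega>) k = Suc (\<Sum>k'\<in>I. if rank_order (v \<omega>) k' k then 1 else 0)" for \<omega>
    unfolding rank_eq_card_rank_order card_eq_sum sum.inter_filter[OF assms(1)] ..
  moreover have "(\<lambda>\<omega>. if rank_order (v \<omega>) k' k then 1 else 0 :: nat) \<in> measurable M (count_space UNIV)"
    if "k' \<in> I" for k'
    using assms(3)[OF that] assms(3)[OF assms(2)] unfolding rank_order_def by measurable
  ultimately show ?thesis
    by (simp add: measurable_sum_nat)
qed

lemma rank_fraction_mem:
  assumes "k \<in> {1..N} \<times> {1..m}"
  shows "real (rank ({1..N} \<times> {1..m}) v k) / (real m * real N + 1) \<in> {0<..<1}"
proof -
  have "rank ({1..N} \<times> {1..m}) v k \<in> {1..N * m}"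
    using bij_betw_apply[OF bij_betw_rank assms] by simp
  then have "1 \<le> real (rank ({1..N} \<times> {1..m}) v k)"
    and "real (rank ({1..N} \<times> {1..m}) v k) \<le> real m * real N"
    by (simp_all add: mult.commute flip: of_nat_mult)
  then show ?thesis
    by simp
qed

lemma orbgrand_metric_nonneg:
  assumes "bij_betw F (cdf_core F) {0<..<1}"
  shows "0 \<le> orbgrand_metric m F N T z"
  unfolding orbgrand_metric_def Let_def
proof (intro mult_nonneg_nonneg sum_nonneg)
  fix k assume k: "k \<in> {1..N} \<times> {1..m}"
  let ?u = "real (rank ({1..N} \<times> {1..m}) (\<lambda>(i', j'). \<bar>T i' j'\<bar>) k) / (real m * real N + 1)"
  have "0 < cdf_inv F ?u"
    using cdf_inv_mem_cdf_core(1)[OF assms rank_fraction_mem[OF k]] by (simp add: cdf_core_def)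
  then show "0 \<le> (case k of (i, j) \<Rightarrow> cdf_inv F (real (rank ({1..N} \<times> {1..m})
      (\<lambda>(i', j'). \<bar>T i' j'\<bar>) (i, j)) / (real m * real N + 1)) * (if sgn1 (T i j) * z i j < 0 then 1 else 0))"
    by (cases k) simp
qed simp

lemma orbgrand_metric_cong:
  assumes "\<And>i j. i \<in> {1..N} \<Longrightarrow> j \<in> {1..m} \<Longrightarrow> z i j = z' i j"
  shows "orbgrand_metric m F N T z = orbgrand_metric m F N T z'"
  unfolding orbgrand_metric_def Let_def using assms by (intro arg_cong2[where f="(*)"] refl sum.cong) auto

lemma borel_measurable_orbgrand_metric:
  assumes T: "\<And>i j. i \<in> {1..N} \<Longrightarrow> j \<in> {1..m} \<Longrightarrow> (\<lambda>\<omega>. T \<omega> i j) \<in> borel_measurable M"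
    and Z: "\<And>i j. i \<in> {1..N} \<Longrightarrow> j \<in> {1..m} \<Longrightarrow> (\<lambda>\<omega>. Z \<omega> i j) \<in> borel_measurable M"
  shows "(\<lambda>\<omega>. orbgrand_metric m F N (T \<omega>) (Z \<omega>)) \<in> borel_measurable M"
proof -
  define I where "I = {1..N} \<times> {1..m}"
  define v where "v \<omega> = (\<lambda>(i, j). \<bar>T \<omega> i j\<bar>)" for \<omega>
  have rank: "(\<lambda>\<omega>. rank I (v \<omega>) k) \<in> measurable M (count_space UNIV)" if "k \<in> I" for k
    using that T unfolding I_def v_def by (intro measurable_rank) auto
  have sgn1: "sgn1 \<in> borel_measurable borel"
    unfolding sgn1_def by measurable
  have "(\<lambda>\<omega>. cdf_inv F (real (rank I (v \<omega>) (i, j)) / (real m * real N + 1))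
          * (if sgn1 (T \<omega> i j) * Z \<omega> i j < 0 then 1 else 0)) \<in> borel_measurable M"
    if ij: "(i, j) \<in> I" for i j
  proof -
    note [measurable] = measurable_compose[OF rank[OF ij] measurable_count_space] sgn1
    have [measurable]: "(\<lambda>\<omega>. T \<omega> i j) \<in> borel_measurable M" "(\<lambda>\<omega>. Z \<omega> i j) \<in> borel_measurable M"
      using T Z ij unfolding I_def by auto
    show ?thesis by measurable
  qed
  then show ?thesis
    unfolding orbgrand_metric_def Let_def I_def[symmetric] v_def[symmetric]
    by (auto intro!: borel_measurable_sum)
qed

(* Each bit contributes its own factor, and since the ranks enumerate {1..Nm}
   the product does not depend on T. *)
lemma sum_exp_orbgrand_metric:
  assumes "m \<ge> 1" "N \<ge> 1"
  shows "(\<Sum>z\<in>PiE {1..N} (\<lambda>_. label_set m). exp (real N * \<theta> * orbgrand_metric m F N T z))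
       = (\<Prod>k=1..N * m. 1 + exp (\<theta> / real m * cdf_inv F (real k / (real m * real N + 1))))"
proof -
  define I where "I = {1..N} \<times> {1..m}"
  define a where "a i j = cdf_inv F (real (rank I (\<lambda>(i, j). \<bar>T i j\<bar>) (i, j)) / (real m * real N + 1))"
    for i j
  define f where "f i j x = exp (\<theta> / real m * a i j * (if sgn1 (T i j) * x < 0 then 1 else 0))"
    for i j and x :: real
  have pair_sum: "(\<Sum>x\<in>{-1, 1}. f i j x) = 1 + exp (\<theta> / real m * a i j)" for i j
    by (cases "0 \<le> T i j") (simp_all add: f_def sgn1_def)
  have "exp (real N * \<theta> * orbgrand_metric m F N T z) = (\<Prod>i=1..N. \<Prod>j=1..m. f i j (z i j))" for z
  proof -
    have "real N * \<theta> * orbgrand_metric m F N T z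
        = (\<Sum>(i, j)\<in>I. \<theta> / real m * a i j * (if sgn1 (T i j) * z i j < 0 then 1 else 0))"
      using assms unfolding orbgrand_metric_def Let_def I_def[symmetric] a_def
      by (simp add: sum_distrib_left case_prod_unfold field_simps)
    then show ?thesis
      by (simp add: exp_sum f_def case_prod_unfold I_def prod.cartesian_product)
  qed
  then have "(\<Sum>z\<in>PiE {1..N} (\<lambda>_. label_set m). exp (real N * \<theta> * orbgrand_metric m F N T z))
      = (\<Sum>z\<in>PiE {1..N} (\<lambda>_. PiE {1..m} (\<lambda>_. {-1, 1})). \<Prod>i=1..N. \<Prod>j=1..m. f i j (z i j))"
    by (simp add: label_set_def)
  also have "\<dots> = (\<Prod>i=1..N. \<Sum>b\<in>PiE {1..m} (\<lambda>_. {-1, 1}). \<Prod>j=1..m. f i j (b j))"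
    by (rule prod_sum_PiE[symmetric]) (simp_all add: finite_PiE)
  also have "\<dots> = (\<Prod>i=1..N. \<Prod>j=1..m. \<Sum>x\<in>{-1, 1}. f i j x)"
    by (intro prod.cong refl prod_sum_PiE[symmetric]) (simp_all add: finite_PiE)
  also have "\<dots> = (\<Prod>i=1..N. \<Prod>j=1..m. 1 + exp (\<theta> / real m * a i j))"
    by (intro prod.cong refl) (simp add: pair_sum)
  also have "\<dots> = (\<Prod>(i, j)\<in>I. 1 + exp (\<theta> / real m * a i j))"
    by (simp add: I_def prod.cartesian_product)
  also have "\<dots> = (\<Prod>k=1..N * m. 1 + exp (\<theta> / real m * cdf_inv F (real k / (real m * real N + 1))))"
    using bij_betw_rank[of I "\<lambda>(i, j). \<bar>T i j\<bar>"] unfolding a_def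
    by (subst prod.reindex_bij_betw[symmetric, where h="rank I _"]) (auto simp: I_def case_prod_unfold)
  finally show ?thesis .
qed

section \<open>Riemann sums of monotone functions\<close>

lemma emeasure_lborel_Ioo_finite: "emeasure lborel {a<..<b::real} < \<infinity>"
  by (cases "a \<le> b") auto

lemma set_integral_Ioo_const: "a \<le> b \<Longrightarrow> (LBINT x:{a<..<b}. c) = (b - a) * (c :: real)"
  using emeasure_lborel_Ioo_finite[of a b] by (simp add: set_lebesgue_integral_def)

context
  fixes f :: "real \<Rightarrow> real" and B :: real
  assumes f_measurable: "f \<in> borel_measurable borel" and f_bounded: "\<And>x. \<bar>f x\<bar> \<le> B"
begin

lemma set_integrable_Ioo: "set_integrable lborel {a<..<b} f"
  unfolding set_integrable_def using f_measurable f_bounded emeasure_lborel_Ioo_finite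
  by (intro integrableI_bounded_set_indicator[where B=B]) simp_all

lemma set_integral_Ioo_split:
  assumes "a \<le> b" "b \<le> c"
  shows "(LBINT x:{a<..<c}. f x) = (LBINT x:{a<..<b}. f x) + (LBINT x:{b<..<c}. f x)"
proof -
  have "AE x in lborel. indicator {a<..<c} x * f x = indicator {a<..<b} x * f x + indicator {b<..<c} x * f x"
    using AE_lborel_singleton[of b] by eventually_elim (use assms in \<open>auto simp: indicator_def\<close>)
  then show ?thesis
    using set_integrable_Ioo[of a b] set_integrable_Ioo[of b c]
    unfolding set_lebesgue_integral_def set_integrable_def using f_measurable
    by (simp add: integral_cong_AE flip: Bochner_Integration.integral_add)
qed

lemma set_integral_Ioo_telescope:
  assumes "mono x" "l \<le> n"
  shows "(\<Sum>k=l..<n. LBINT t:{x k<..<x (Suc k)}. f t) = (LBINT t:{x l<..<x n}. f t)"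
  using assms(2)
proof (induction n rule: dec_induct)
  case (step n)
  then show ?case
    using set_integral_Ioo_split[of "x l" "x n" "x (Suc n)"] monoD[OF assms(1)] by simp
qed (simp add: set_lebesgue_integral_def)

lemma set_integral_Ioo_le:
  assumes "a \<le> b" "\<And>x. x \<in> {a<..<b} \<Longrightarrow> f x \<le> c"
  shows "(LBINT x:{a<..<b}. f x) \<le> (b - a) * c"
  using set_integral_mono[OF set_integrable_Ioo, of a b "\<lambda>_. c"] assms
  by (simp add: set_integrable_def set_integral_Ioo_const emeasure_lborel_Ioo_finite)

lemma set_integral_Ioo_ge:
  assumes "a \<le> b" "\<And>x. x \<in> {a<..<b} \<Longrightarrow> c \<le> f x"
  shows "(b - a) * c \<le> (LBINT x:{a<..<b}. f x)"
  using set_integral_mono[OF _ set_integrable_Ioo, of a b "\<lambda>_. c"] assms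
  by (simp add: set_integrable_def set_integral_Ioo_const emeasure_lborel_Ioo_finite)

lemma abs_set_integral_Ioo_le:
  assumes "a \<le> b"
  shows "\<bar>LBINT x:{a<..<b}. f x\<bar> \<le> (b - a) * B"
proof -
  have "- B \<le> f x" "f x \<le> B" for x
    using f_bounded[of x] by auto
  then show ?thesis
    using set_integral_Ioo_le[OF assms, of B] set_integral_Ioo_ge[OF assms, of "- B"] by (simp add: abs_le_iff)
qed

end

lemma antimono_riemann_sum_estimate:
  fixes \<phi> :: "real \<Rightarrow> real"
  assumes anti: "antimono_on {0<..<1} \<phi>"
    and bounded: "\<And>u. u \<in> {0<..<1} \<Longrightarrow> \<bar>\<phi> u\<bar> \<le> B"
  shows "\<bar>(\<Sum>k=1..M. \<phi> (real k / (real M + 1))) / (real M + 1) - (LBINT u:{0<..<1}. \<phi> u)\<bar>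
    \<le> B / (real M + 1)"
proof -
  define \<phi>0 where "\<phi>0 u = indicator {0<..<1} u * \<phi> u" for u :: real
  have "mono_on {0<..<1} (\<lambda>u. - \<phi> u)"
    using anti by (auto simp: monotone_on_def)
  then have "(\<lambda>u. - \<phi> u) \<in> borel_measurable (restrict_space borel {0<..<1})"
    by (rule borel_measurable_mono_on_fnc)
  then have \<phi>0_measurable: "\<phi>0 \<in> borel_measurable borel"
    unfolding \<phi>0_def borel_measurable_uminus_eq by (simp add: borel_measurable_restrict_space_iff)
  have \<phi>0_bounded: "\<bar>\<phi>0 u\<bar> \<le> B" for u
    using bounded[of u] bounded[of "1/2"] by (auto simp: \<phi>0_def indicator_def)
  note integral_facts = set_integral_Ioo_telescope set_integral_Ioo_le set_integral_Ioo_ge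
    abs_set_integral_Ioo_le set_integral_Ioo_split
  note J = integral_facts[OF \<phi>0_measurable \<phi>0_bounded]
  define J where "J a b = (LBINT t:{a<..<b}. \<phi>0 t)" for a b
  define h where "h = 1 / (real M + 1)"
  define x where "x k = real k * h" for k
  define S where "S = (\<Sum>k=1..M. \<phi> (x k))"
  have "h > 0" "h \<le> 1" "x 0 = 0" "x (Suc 0) = h" "x M = 1 - h" "x (Suc M) = 1"
    by (auto simp: x_def h_def field_simps)
  have "mono x"
    using \<open>h > 0\<close> by (auto intro!: monoI mult_right_mono simp: x_def)
  have x_Suc: "x (Suc k) - x k = h" for k
    by (simp add: x_def algebra_simps)
  have x_mem: "x k \<in> {0<..<1}" if "1 \<le> k" "k \<le> M" for k
    using that by (auto simp: x_def h_def field_simps)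
  have "J h 1 \<le> h * S"
  proof -
    have "J (x k) (x (Suc k)) \<le> h * \<phi> (x k)" if "k \<in> {1..M}" for k
    proof -
      have "\<phi>0 y \<le> \<phi> (x k)" if "y \<in> {x k<..<x (Suc k)}" for y
        using that x_mem[of k] \<open>k \<in> {1..M}\<close> monoD[OF \<open>mono x\<close>, of "Suc k" "Suc M"] \<open>x (Suc M) = 1\<close> anti
        by (auto simp: \<phi>0_def monotone_on_def)
      then show ?thesis
        using J(2)[of "x k" "x (Suc k)" "\<phi> (x k)"] x_Suc[of k] monoD[OF \<open>mono x\<close>, of k "Suc k"]
        by (simp add: J_def mult.commute)
    qed
    then have "(\<Sum>k=1..M. J (x k) (x (Suc k))) \<le> h * S"
      unfolding S_def sum_distrib_left by (rule sum_mono)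
    then show ?thesis
      using J(1)[OF \<open>mono x\<close>, of 1 "Suc M"] \<open>x (Suc 0) = h\<close> \<open>x (Suc M) = 1\<close>
      by (simp add: J_def atLeastLessThanSuc_atLeastAtMost)
  qed
  moreover have "h * S \<le> J 0 (1 - h)"
  proof -
    have "h * \<phi> (x (Suc k)) \<le> J (x k) (x (Suc k))" if "k < M" for k
    proof -
      have "\<phi> (x (Suc k)) \<le> \<phi>0 y" if "y \<in> {x k<..<x (Suc k)}" for y
        using that x_mem[of "Suc k"] \<open>k < M\<close> monoD[OF \<open>mono x\<close>, of 0 k] \<open>x 0 = 0\<close> anti
        by (auto simp: \<phi>0_def monotone_on_def)
      then show ?thesis
        using J(3)[of "x k" "x (Suc k)" "\<phi> (x (Suc k))"] x_Suc[of k] monoD[OF \<open>mono x\<close>, of k "Suc k"]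
        by (simp add: J_def mult.commute)
    qed
    then have "(\<Sum>k<M. h * \<phi> (x (Suc k))) \<le> (\<Sum>k<M. J (x k) (x (Suc k)))"
      by (intro sum_mono) simp
    moreover have "h * S = (\<Sum>k<M. h * \<phi> (x (Suc k)))"
      unfolding S_def sum_distrib_left using sum.atLeast1_atMost_eq[of "\<lambda>k. h * \<phi> (x k)" M] by simp
    ultimately show ?thesis
      using J(1)[OF \<open>mono x\<close>, of 0 M] \<open>x 0 = 0\<close> \<open>x M = 1 - h\<close> by (simp add: J_def lessThan_atLeast0)
  qed
  moreover have "J 0 1 = J 0 h + J h 1" "J 0 1 = J 0 (1 - h) + J (1 - h) 1"
    using J(5)[of 0 h 1] J(5)[of 0 "1 - h" 1] \<open>h > 0\<close> \<open>h \<le> 1\<close> by (simp_all add: J_def)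
  moreover have "\<bar>J 0 h\<bar> \<le> h * B" "\<bar>J (1 - h) 1\<bar> \<le> h * B"
    using J(4)[of 0 h] J(4)[of "1 - h" 1] \<open>h > 0\<close> by (simp_all add: J_def mult.commute)
  moreover have "J 0 1 = (LBINT u:{0<..<1}. \<phi> u)"
    unfolding J_def by (rule set_lebesgue_integral_cong) (simp_all add: \<phi>0_def)
  ultimately have "\<bar>h * S - (LBINT u:{0<..<1}. \<phi> u)\<bar> \<le> h * B"
    unfolding abs_le_iff by linarith
  then show ?thesis
    by (simp add: S_def x_def h_def)
qed

lemma antimono_riemann_sum_tendsto:
  fixes \<phi> :: "real \<Rightarrow> real"
  assumes "antimono_on {0<..<1} \<phi>" "\<And>u. u \<in> {0<..<1} \<Longrightarrow> \<bar>\<phi> u\<bar> \<le> B"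
  shows "(\<lambda>M. (\<Sum>k=1..M. \<phi> (real k / (real M + 1))) / real M) \<longlonglongrightarrow> (LBINT u:{0<..<1}. \<phi> u)"
proof -
  have "(\<lambda>M. B / (real M + 1)) \<longlonglongrightarrow> 0"
    using LIMSEQ_Suc[OF lim_const_over_n[of B]] by (simp add: add.commute)
  then have "(\<lambda>M. (\<Sum>k=1..M. \<phi> (real k / (real M + 1))) / (real M + 1) - (LBINT u:{0<..<1}. \<phi> u))
      \<longlonglongrightarrow> 0"
    by (rule Lim_null_comparison[OF always_eventually, rotated])
       (use antimono_riemann_sum_estimate[OF assms] in simp)
  then have "(\<lambda>M. (\<Sum>k=1..M. \<phi> (real k / (real M + 1))) / (real M + 1)) \<longlonglongrightarrow> (LBINT u:{0<..<1}. \<phi> u)"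
    by (rule LIM_zero_cancel)
  then have "(\<lambda>M. (\<Sum>k=1..M. \<phi> (real k / (real M + 1))) / (real M + 1) * (real (Suc M) / real M))
      \<longlonglongrightarrow> (LBINT u:{0<..<1}. \<phi> u) * 1"
    by (intro tendsto_mult LIMSEQ_Suc_n_over_n)
  then show ?thesis
    by (simp add: add.commute)
qed

section \<open>Mixtures of densities\<close>

definition mixture_distr :: "nat \<Rightarrow> (nat \<Rightarrow> 'y::euclidean_space \<Rightarrow> real) \<Rightarrow> (nat \<Rightarrow> 'y \<Rightarrow> real)
    \<Rightarrow> real measure" where
  "mixture_distr m f H =
     distr (density (count_space {1..m} \<Otimes>\<^sub>M lborel) (\<lambda>(j, y). ennreal (f j y / real m)))
       borel (\<lambda>(j, y). H j y)"

context
  fixes m :: nat and f :: "nat \<Rightarrow> 'y::euclidean_space \<Rightarrow> real" and H :: "nat \<Rightarrow> 'y \<Rightarrow> real"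
  assumes m: "m \<ge> 1"
    and f_measurable: "\<And>j. j \<in> {1..m} \<Longrightarrow> f j \<in> borel_measurable borel"
    and f_nonneg: "\<And>j y. j \<in> {1..m} \<Longrightarrow> 0 \<le> f j y"
    and f_integrable: "\<And>j. j \<in> {1..m} \<Longrightarrow> integrable lborel (f j)"
    and f_integral: "\<And>j. j \<in> {1..m} \<Longrightarrow> (\<integral>y. f j y \<partial>lborel) = 1"
    and H_measurable: "\<And>j. j \<in> {1..m} \<Longrightarrow> H j \<in> borel_measurable borel"
begin

lemma measurable_mixture_components:
  "(\<lambda>(j, y). f j y) \<in> borel_measurable (count_space {1..m} \<Otimes>\<^sub>M lborel)"
  "(\<lambda>(j, y). H j y) \<in> borel_measurable (count_space {1..m} \<Otimes>\<^sub>M lborel)"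
  by (rule measurable_pair_measure_countable1; simp add: f_measurable H_measurable)+

abbreviation (input) "joint_law \<equiv> density (count_space {1..m} \<Otimes>\<^sub>M lborel) (\<lambda>(j, y). ennreal (f j y / real m))"

lemma nn_integral_mixture_density:
  assumes "G \<in> borel_measurable (count_space {1..m} \<Otimes>\<^sub>M lborel)"
  shows "integral\<^sup>N joint_law G = (\<Sum>j=1..m. \<integral>\<^sup>+ y. ennreal (f j y / real m) * G (j, y) \<partial>lborel)"
proof -
  have density: "(\<lambda>(j, y). ennreal (f j y / real m)) \<in> borel_measurable (count_space {1..m} \<Otimes>\<^sub>M lborel)"
    using measurable_mixture_components(1) by (simp add: case_prod_unfold)
  have "integral\<^sup>N joint_law G
      = (\<integral>\<^sup>+ x. (case x of (j, y) \<Rightarrow> ennreal (f j y / real m)) * G x \<partial>(count_space {1..m} \<Otimes>\<^sub>M lborel))"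
    by (rule nn_integral_density[OF density assms])
  also have "\<dots> = (\<integral>\<^sup>+ j. \<integral>\<^sup>+ y. ennreal (f j y / real m) * G (j, y) \<partial>lborel \<partial>count_space {1..m})"
    using density assms by (subst lborel.nn_integral_fst[symmetric]) auto
  also have "\<dots> = (\<Sum>j=1..m. \<integral>\<^sup>+ y. ennreal (f j y / real m) * G (j, y) \<partial>lborel)"
    by (rule nn_integral_count_space_finite) simp
  finally show ?thesis .
qed

lemma measurable_mixture_value: "(\<lambda>(j, y). H j y) \<in> measurable joint_law borel"
  unfolding measurable_density_eq1 by (rule measurable_mixture_components)

lemma real_distribution_mixture_distr: "real_distribution (mixture_distr m f H)"
proof -
  have "emeasure joint_law (space joint_law) = (\<Sum>j=1..m. \<integral>\<^sup>+ y. ennreal (f j y / real m) \<partial>lborel)"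
    using nn_integral_mixture_density[of "\<lambda>_. 1"] by simp
  also have "\<dots> = (\<Sum>j=1..m. ennreal (1 / real m))"
  proof (intro sum.cong refl)
    fix j assume j: "j \<in> {1..m}"
    have "(\<integral>\<^sup>+ y. ennreal (f j y / real m) \<partial>lborel) = ennreal (\<integral>y. f j y / real m \<partial>lborel)"
      using j f_integrable f_nonneg by (intro nn_integral_eq_integral) auto
    then show "(\<integral>\<^sup>+ y. ennreal (f j y / real m) \<partial>lborel) = ennreal (1 / real m)"
      using f_integral[OF j] by simp
  qed
  also have "\<dots> = 1"
    using m by (simp add: ennreal_of_nat_eq_real_of_nat flip: ennreal_mult')
  finally have "prob_space joint_law"
    by (rule prob_spaceI)
  from prob_space.prob_space_distr[OF this measurable_mixture_value] show ?thesis
    unfolding mixture_distr_def real_distribution_def real_distribution_axioms_def by simp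
qed

lemma integral_mixture_distr:
  assumes G: "G \<in> borel_measurable borel" and G_nonneg: "\<And>x. 0 \<le> G x" and G_le: "\<And>x. G x \<le> C"
  shows "(\<integral>x. G x \<partial>mixture_distr m f H) = (\<Sum>j=1..m. \<integral>y. f j y * G (H j y) \<partial>lborel) / real m"
proof -
  have GH: "(\<lambda>(j, y). G (H j y)) \<in> borel_measurable (count_space {1..m} \<Otimes>\<^sub>M lborel)"
    using measurable_compose[OF measurable_mixture_components(2) G] by (simp add: case_prod_unfold)
  have integrable: "integrable lborel (\<lambda>y. f j y / real m * G (H j y))" if j: "j \<in> {1..m}" for j
  proof (rule Bochner_Integration.integrable_bound)
    show "integrable lborel (\<lambda>y. f j y / real m * C)"
      using f_integrable[OF j] by simp
    show "(\<lambda>y. f j y / real m * G (H j y)) \<in> borel_measurable lborel"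
      using f_measurable[OF j] H_measurable[OF j] G by measurable
    show "AE y in lborel. norm (f j y / real m * G (H j y)) \<le> norm (f j y / real m * C)"
      using f_nonneg[OF j] G_nonneg G_le
      by (intro AE_I2) (simp add: abs_mult mult_left_mono divide_right_mono order_trans[OF G_nonneg G_le])
  qed
  have "(\<integral>x. G x \<partial>mixture_distr m f H) = (\<integral>x. G (case x of (j, y) \<Rightarrow> H j y) \<partial>joint_law)"
    unfolding mixture_distr_def by (rule integral_distr[OF measurable_mixture_value G])
  also have "\<dots> = enn2real (\<integral>\<^sup>+ x. ennreal (G (case x of (j, y) \<Rightarrow> H j y)) \<partial>joint_law)"
    using GH G_nonneg by (intro integral_eq_nn_integral) (auto simp: measurable_density_eq1 case_prod_unfold)
  also have "(\<integral>\<^sup>+ x. ennreal (G (case x of (j, y) \<Rightarrow> H j y)) \<partial>joint_law)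
      = (\<Sum>j=1..m. \<integral>\<^sup>+ y. ennreal (f j y / real m * G (H j y)) \<partial>lborel)"
    using GH f_nonneg G_nonneg
    by (subst nn_integral_mixture_density)
       (auto simp: case_prod_unfold intro!: sum.cong nn_integral_cong simp flip: ennreal_mult)
  also have "\<dots> = (\<Sum>j=1..m. ennreal (\<integral>y. f j y / real m * G (H j y) \<partial>lborel))"
    using integrable f_nonneg G_nonneg by (intro sum.cong refl nn_integral_eq_integral) auto
  also have "\<dots> = ennreal (\<Sum>j=1..m. \<integral>y. f j y / real m * G (H j y) \<partial>lborel)"
    using f_nonneg G_nonneg by (intro sum_ennreal) (auto intro!: integral_nonneg_AE)
  finally have "(\<integral>x. G x \<partial>mixture_distr m f H)
      = enn2real (ennreal (\<Sum>j=1..m. \<integral>y. f j y / real m * G (H j y) \<partial>lborel))" .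
  moreover have "0 \<le> (\<Sum>j=1..m. \<integral>y. f j y / real m * G (H j y) \<partial>lborel)"
    using f_nonneg G_nonneg by (intro sum_nonneg integral_nonneg_AE) auto
  ultimately show ?thesis
    by (simp add: sum_divide_distrib)
qed

end

section \<open>Conditioning on independent events\<close>

context prob_space
begin

lemma sigma_finite_subalgebra_of_subalgebra:
  assumes "subalgebra M F"
  shows "sigma_finite_subalgebra M F"
  using assms finite_measure_axioms
  by (intro finite_measure_subalgebra_is_sigma_finite)
     (simp add: finite_measure_subalgebra_def finite_measure_subalgebra_axioms_def)

lemma real_cond_exp_indicator_indep:
  assumes subalg: "subalgebra M F" and E: "E \<in> events"
    and indep: "\<And>A. A \<in> sets F \<Longrightarrow> prob (A \<inter> E) = prob A * prob E"
  shows "AE x in M. real_cond_exp M F (indicator E) x = prob E"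
proof -
  interpret sigma_finite_subalgebra M F
    using sigma_finite_subalgebra_of_subalgebra[OF subalg] .
  show ?thesis
  proof (rule real_cond_exp_charact)
    fix A assume A: "A \<in> sets F"
    then have "A \<in> events"
      using subalg by (auto simp: subalgebra_def)
    then show "(\<integral>x\<in>A. indicator E x \<partial>M) = (\<integral>x\<in>A. prob E \<partial>M)"
      using E indep[OF A] by (simp add: set_lebesgue_integral_def indicator_inter_arith[symmetric] mult.commute)
  qed (use E in \<open>auto intro!: integrable_real_indicator simp: emeasure_finite simp flip: less_top\<close>)
qed

lemma real_cond_exp_sum_indep_events:
  assumes subalg: "subalgebra M F" and Z: "finite Z" and E: "\<And>z. E z \<in> events"
    and indep: "\<And>z A. A \<in> sets F \<Longrightarrow> prob (A \<inter> E z) = prob A * prob (E z)"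
    and G: "\<And>z. G z \<in> borel_measurable F" and bounded: "\<And>z x. \<bar>G z x\<bar> \<le> B"
  shows "AE x in M. real_cond_exp M F (\<lambda>x. \<Sum>z\<in>Z. G z x * indicator (E z) x) x
                      = (\<Sum>z\<in>Z. G z x * prob (E z))"
proof -
  interpret sigma_finite_subalgebra M F
    using sigma_finite_subalgebra_of_subalgebra[OF subalg] .
  have G_M: "G z \<in> borel_measurable M" for z
    using G by (rule measurable_from_subalg[OF subalg])
  have "0 \<le> B"
    using bounded by (rule order_trans[OF abs_ge_zero])
  have integrable: "integrable M (\<lambda>x. G z x * indicator (E z) x)" for z
    using G_M E bounded \<open>0 \<le> B\<close> by (intro integrable_const_bound[where B=B]) (auto simp: indicator_def)
  have "AE x in M. real_cond_exp M F (\<lambda>x. G z x * indicator (E z) x) x = G z x * prob (E z)" for z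
  proof -
    have "AE x in M. real_cond_exp M F (indicator (E z)) x = prob (E z)"
      using subalg E by (rule real_cond_exp_indicator_indep) (rule indep)
    moreover have "AE x in M. real_cond_exp M F (\<lambda>x. G z x * indicator (E z) x) x
        = G z x * real_cond_exp M F (indicator (E z)) x"
      using G borel_measurable_indicator[OF E] integrable by (rule real_cond_exp_mult)
    ultimately show ?thesis
      by eventually_elim simp
  qed
  then have "AE x in M. \<forall>z\<in>Z. real_cond_exp M F (\<lambda>x. G z x * indicator (E z) x) x
      = G z x * prob (E z)"
    by (simp add: AE_finite_all[OF Z])
  moreover have "AE x in M. real_cond_exp M F (\<lambda>x. \<Sum>z\<in>Z. G z x * indicator (E z) x) x
      = (\<Sum>z\<in>Z. real_cond_exp M F (\<lambda>x. G z x * indicator (E z) x) x)"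
    using integrable by (rule real_cond_exp_sum)
  ultimately show ?thesis
    by eventually_elim simp
qed

end

section \<open>The bit channels\<close>

lemma finite_label_set: "finite (label_set m)"
  unfolding label_set_def by (simp add: finite_PiE)

lemma card_label_set: "card (label_set m) = 2 ^ m"
proof -
  have "card {-1, 1::real} = 2"
    by simp
  then show ?thesis
    unfolding label_set_def by (simp add: card_PiE numeral_2_eq_2)
qed

lemma one_plus_exp_pos: "0 < 1 + exp (x :: real)"
  and one_plus_exp_neq_zero: "1 + exp x \<noteq> 0"
  using exp_gt_zero[of x] by linarith+

lemma ln_one_plus_exp_bounds:
  assumes "x \<le> (0 :: real)"
  shows "0 \<le> ln (1 + exp x)" "ln (1 + exp x) \<le> ln 2"
  using assms one_plus_exp_pos[of x] by simp_all

locale bicm_channel =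
  fixes m :: nat and S :: "'s set" and mu :: "(nat \<Rightarrow> real) \<Rightarrow> 's"
    and p :: "'s \<Rightarrow> 'y::euclidean_space \<Rightarrow> real"
  assumes m: "m \<ge> 1"
    and mu: "bij_betw mu (label_set m) S"
    and dens: "\<forall>s\<in>S. (\<forall>y. 0 \<le> p s y) \<and> integrable lborel (p s) \<and> (\<integral>y. p s y \<partial>lborel) = 1"
    and Psibar_bij: "bij_betw (Psibar m mu S p) (cdf_core (Psibar m mu S p)) {0<..<1}"
begin

abbreviation "Psibar_inv \<equiv> cdf_inv (Psibar m mu S p)"

definition bit_density :: "nat \<Rightarrow> 'y \<Rightarrow> real" where
  "bit_density j y = (qbit m mu S p j 1 y + qbit m mu S p j (-1) y) / 2"

lemma finite_S: "finite S"
  using mu finite_label_set bij_betw_finite by blast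

lemma card_S: "card S = 2 ^ m"
  using mu card_label_set bij_betw_same_card by metis

lemma measurable_p [measurable]: "s \<in> S \<Longrightarrow> p s \<in> borel_measurable borel"
  using dens borel_measurable_integrable[of lborel "p s"] by simp

lemma measurable_qbit [measurable]: "qbit m mu S p j \<sigma> \<in> borel_measurable borel"
  unfolding qbit_def by (intro borel_measurable_times borel_measurable_const borel_measurable_sum) simp

lemma measurable_llr [measurable]: "llr m mu S p j \<in> borel_measurable borel"
  unfolding llr_def by measurable

lemma measurable_bit_density [measurable]: "bit_density j \<in> borel_measurable borel"
  unfolding bit_density_def by measurable

lemma bitlab_mem: "s \<in> S \<Longrightarrow> j \<in> {1..m} \<Longrightarrow> bitlab m mu s j \<in> {-1, 1}"
  using mu inv_into_into[of s mu "label_set m"]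
  by (auto simp: bitlab_def label_set_def bij_betw_def PiE_iff)

lemma bit_density_eq: "j \<in> {1..m} \<Longrightarrow> bit_density j = (\<lambda>y. (\<Sum>s\<in>S. p s y) / 2 ^ m)"
proof
  fix y assume j: "j \<in> {1..m}"
  have "S = {s\<in>S. bitlab m mu s j = 1} \<union> {s\<in>S. bitlab m mu s j = -1}"
    using bitlab_mem[OF _ j] by auto
  then have "(\<Sum>s\<in>S. p s y) = (\<Sum>s\<in>{s\<in>S. bitlab m mu s j = 1}. p s y)
      + (\<Sum>s\<in>{s\<in>S. bitlab m mu s j = -1}. p s y)"
    using finite_S by (subst (1) \<open>S = _\<close>, intro sum.union_disjoint) auto
  moreover have "(2::real) ^ m = 2 * 2 ^ (m - 1)"
    using m by (cases m) auto
  ultimately show "bit_density j y = (\<Sum>s\<in>S. p s y) / 2 ^ m"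
    unfolding bit_density_def qbit_def by (simp add: field_simps)
qed

lemma bit_density_nonneg: "j \<in> {1..m} \<Longrightarrow> 0 \<le> bit_density j y"
  using dens by (simp add: bit_density_eq sum_nonneg)

lemma integrable_bit_density: "j \<in> {1..m} \<Longrightarrow> integrable lborel (bit_density j)"
  using dens by (simp add: bit_density_eq)

lemma integral_bit_density: "j \<in> {1..m} \<Longrightarrow> (\<integral>y. bit_density j y \<partial>lborel) = 1"
  using dens card_S by (simp add: bit_density_eq Bochner_Integration.integral_sum)

definition llr_mixture :: "real measure" where
  "llr_mixture = mixture_distr m bit_density (\<lambda>j y. \<bar>llr m mu S p j y\<bar>)"

lemma real_distribution_llr_mixture: "real_distribution llr_mixture"
  unfolding llr_mixture_def using m
  by (rule real_distribution_mixture_distr)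
     (simp_all add: bit_density_nonneg integrable_bit_density integral_bit_density)

lemma integral_llr_mixture:
  assumes "G \<in> borel_measurable borel" "\<And>x. 0 \<le> G x" "\<And>x. G x \<le> C"
  shows "(\<integral>x. G x \<partial>llr_mixture)
    = (\<Sum>j=1..m. \<integral>y. bit_density j y * G \<bar>llr m mu S p j y\<bar> \<partial>lborel) / real m"
  unfolding llr_mixture_def using m _ bit_density_nonneg integrable_bit_density integral_bit_density _ assms
  by (rule integral_mixture_distr) simp_all

lemma Psi_eq_integral:
  "Psi m mu S p j t = (\<integral>y. bit_density j y * indicator {..t} \<bar>llr m mu S p j y\<bar> \<partial>lborel)"
  if j: "j \<in> {1..m}"
proof -
  have integrable: "integrable lborel (\<lambda>y. bit_density j y * indicator {..t} \<bar>llr m mu S p j y\<bar>)"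
    using bit_density_nonneg[OF j]
    by (intro Bochner_Integration.integrable_bound[OF integrable_bit_density[OF j]]) (auto simp: indicator_def)
  have "{y. \<bar>llr m mu S p j y\<bar> \<le> t} \<in> sets borel"
    by measurable
  then have "Psi m mu S p j t
      = enn2real (\<integral>\<^sup>+y. ennreal (bit_density j y * indicator {..t} \<bar>llr m mu S p j y\<bar>) \<partial>lborel)"
    unfolding Psi_def bit_density_def[symmetric] measure_def
    by (subst emeasure_density) (auto intro!: arg_cong[where f=enn2real] nn_integral_cong simp: indicator_def)
  also have "\<dots> = (\<integral>y. bit_density j y * indicator {..t} \<bar>llr m mu S p j y\<bar> \<partial>lborel)"
    using integrable bit_density_nonneg[OF j]
    by (subst nn_integral_eq_integral) (auto intro!: integral_nonneg_AE)
  finally show ?thesis .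
qed

lemma cdf_llr_mixture: "cdf llr_mixture = Psibar m mu S p"
proof
  fix t
  have "cdf llr_mixture t = (\<integral>x. indicator {..t} x \<partial>llr_mixture)"
    by (simp add: cdf_def llr_mixture_def mixture_distr_def)
  also have "\<dots> = Psibar m mu S p t"
    by (subst integral_llr_mixture[where C=1]) (simp_all add: Psibar_def Psi_eq_integral)
  finally show "cdf llr_mixture t = Psibar m mu S p t" .
qed

lemma Psibar_neg: "t < 0 \<Longrightarrow> Psibar m mu S p t = 0"
proof -
  assume "t < 0"
  then have "{y. \<bar>llr m mu S p j y\<bar> \<le> t} = {}" for j
    by auto
  then show ?thesis
    by (simp add: Psibar_def Psi_def)
qed

lemma Psibar_inv_mono: "mono_on {0<..<1} Psibar_inv"
proof -
  interpret real_distribution llr_mixture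
    by (rule real_distribution_llr_mixture)
  show ?thesis
    using cdf_nondecreasing by (intro cdf_inv_mono Psibar_neg Psibar_bij) (auto intro: monoI simp: cdf_llr_mixture)
qed

lemma Psibar_inv_pos: "u \<in> {0<..<1} \<Longrightarrow> 0 < Psibar_inv u"
  using cdf_inv_mem_cdf_core(1)[OF Psibar_bij] by (simp add: cdf_core_def)

definition log_mgf_factor :: "real \<Rightarrow> real \<Rightarrow> real" where
  "log_mgf_factor \<theta> u = ln ((1 + exp (\<theta> / real m * Psibar_inv u)) / 2)"

definition cond_mgf :: "real \<Rightarrow> nat \<Rightarrow> real" where
  "cond_mgf \<theta> N =
     (\<Prod>k=1..N * m. (1 + exp (\<theta> / real m * Psibar_inv (real k / (real m * real N + 1)))) / 2)"

lemma ln_cond_mgf: "ln (cond_mgf \<theta> N) = (\<Sum>k=1..N * m. log_mgf_factor \<theta> (real k / (real m * real N + 1)))"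
  unfolding cond_mgf_def log_mgf_factor_def by (subst ln_prod) (simp_all add: one_plus_exp_pos one_plus_exp_neq_zero)

lemma log_mgf_factor_antimono:
  assumes "\<theta> \<le> 0"
  shows "antimono_on {0<..<1} (log_mgf_factor \<theta>)"
proof (rule monotone_onI)
  fix u v :: real
  assume "u \<in> {0<..<1}" "v \<in> {0<..<1}" "u \<le> v"
  then have "\<theta> / real m * Psibar_inv v \<le> \<theta> / real m * Psibar_inv u"
    using Psibar_inv_mono assms by (intro mult_left_mono_neg) (auto simp: mono_on_def divide_nonpos_nonneg)
  then show "log_mgf_factor \<theta> v \<le> log_mgf_factor \<theta> u"
    by (simp add: log_mgf_factor_def one_plus_exp_pos)
qed

lemma log_mgf_factor_eq:
  "u \<in> {0<..<1} \<Longrightarrow> log_mgf_factor \<theta> u = ln (1 + exp (\<theta> / real m * \<bar>Psibar_inv u\<bar>)) - ln 2"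
  using Psibar_inv_pos[of u] by (simp add: log_mgf_factor_def ln_div one_plus_exp_pos one_plus_exp_neq_zero)

lemma integral_log_mgf_factor:
  assumes "\<theta> \<le> 0"
  shows "(LBINT u:{0<..<1}. log_mgf_factor \<theta> u)
    = (\<Sum>j=1..m. \<integral>y. bit_density j y * ln (1 + exp (\<theta> / real m * \<bar>llr m mu S p j y\<bar>)) \<partial>lborel) / real m
      - ln 2"
proof -
  interpret real_distribution llr_mixture
    by (rule real_distribution_llr_mixture)
  define g where "g t = ln (1 + exp (\<theta> / real m * \<bar>t\<bar>))" for t
  have [measurable]: "g \<in> borel_measurable borel"
    unfolding g_def by measurable
  have g_bounds: "0 \<le> g t" "g t \<le> ln 2" for t
  proof -
    have "\<theta> / real m * \<bar>t\<bar> \<le> 0"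
      using assms by (intro mult_nonpos_nonneg divide_nonpos_nonneg) simp_all
    then show "0 \<le> g t" "g t \<le> ln 2"
      unfolding g_def by (rule ln_one_plus_exp_bounds)+
  qed
  then have "integrable llr_mixture g"
    by (intro integrable_const_bound[where B="ln 2"]) simp_all
  have "(LBINT u:{0<..<1}. log_mgf_factor \<theta> u) = (LBINT u:{0<..<1}. g (Psibar_inv u) - ln 2)"
    by (rule set_lebesgue_integral_cong) (simp_all add: log_mgf_factor_eq g_def)
  also have "\<dots> = (\<integral>x. g x - ln 2 \<partial>llr_mixture)"
    by (rule integral_cdf_inv[symmetric])
       (simp_all add: real_distribution_llr_mixture cdf_llr_mixture Psibar_neg Psibar_bij)
  also have "\<dots> = (\<integral>x. g x \<partial>llr_mixture) - (\<integral>x. ln 2 \<partial>llr_mixture)"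
    using \<open>integrable llr_mixture g\<close> by (intro Bochner_Integration.integral_diff) simp_all
  also have "(\<integral>x. ln 2 \<partial>llr_mixture) = (ln 2 :: real)"
    using prob_space by simp
  also have "(\<integral>x. g x \<partial>llr_mixture) = (\<Sum>j=1..m. \<integral>y. bit_density j y * g \<bar>llr m mu S p j y\<bar> \<partial>lborel) / real m"
    using g_bounds by (intro integral_llr_mixture) simp_all
  finally show ?thesis
    by (simp add: g_def)
qed

lemma cond_mgf_limit:
  assumes \<theta>: "\<theta> \<le> 0"
  shows "(\<lambda>N. ln (cond_mgf \<theta> N) / real N) \<longlonglongrightarrow>
    (\<Sum>j=1..m. \<integral>y. bit_density j y * ln (1 + exp (\<theta> / real m * \<bar>llr m mu S p j y\<bar>)) \<partial>lborel)
      - real m * ln 2"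
proof -
  have "\<bar>log_mgf_factor \<theta> u\<bar> \<le> ln 2" if "u \<in> {0<..<1}" for u
    using ln_one_plus_exp_bounds[of "\<theta> / real m * \<bar>Psibar_inv u\<bar>"] \<theta>
    by (simp add: log_mgf_factor_eq[OF that] mult_nonpos_nonneg divide_nonpos_nonneg)
  with log_mgf_factor_antimono[OF \<theta>]
  have "(\<lambda>M. (\<Sum>k=1..M. log_mgf_factor \<theta> (real k / (real M + 1))) / real M)
      \<longlonglongrightarrow> (LBINT u:{0<..<1}. log_mgf_factor \<theta> u)"
    by (rule antimono_riemann_sum_tendsto)
  from LIMSEQ_subseq_LIMSEQ[OF this, of "\<lambda>N. N * m"]
  have lim: "(\<lambda>N. real m * ((\<Sum>k=1..N * m. log_mgf_factor \<theta> (real k / (real (N * m) + 1))) / real (N * m)))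
      \<longlonglongrightarrow> real m * (LBINT u:{0<..<1}. log_mgf_factor \<theta> u)"
    using m by (intro tendsto_mult_left) (simp_all add: strict_mono_def comp_def)
  have seq_eq: "real m * ((\<Sum>k=1..N * m. log_mgf_factor \<theta> (real k / (real (N * m) + 1))) / real (N * m))
      = ln (cond_mgf \<theta> N) / real N" for N
    using m by (simp add: ln_cond_mgf mult.commute)
  show ?thesis
    using lim m unfolding seq_eq integral_log_mgf_factor[OF \<theta>] by (simp add: right_diff_distrib)
qed

end

section \<open>Random coding\<close>

locale bicm_random_coding = bicm_channel m S mu p
  for m :: nat and S :: "'s set" and mu :: "(nat \<Rightarrow> real) \<Rightarrow> 's"
    and p :: "'s \<Rightarrow> 'y::euclidean_space \<Rightarrow> real" +
  fixes P :: "'w measure"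
    and X :: "nat \<Rightarrow> 'w \<Rightarrow> (nat \<Rightarrow> real)"
    and Wc :: "nat \<Rightarrow> 'w \<Rightarrow> (nat \<Rightarrow> real)"
    and Y :: "nat \<Rightarrow> 'w \<Rightarrow> 'y"
  assumes P: "prob_space P"
    and measX: "\<forall>i. X i \<in> measurable P (count_space UNIV)"
    and measW: "\<forall>i. Wc i \<in> measurable P (count_space UNIV)"
    and measY: "\<forall>i. Y i \<in> borel_measurable P"
    and indep: "prob_space.indep_vars P
                  (\<lambda>_. count_space UNIV \<Otimes>\<^sub>M count_space UNIV \<Otimes>\<^sub>M borel)
                  (\<lambda>i \<omega>. (X i \<omega>, Wc i \<omega>, Y i \<omega>)) UNIV"
    and law: "\<forall>i b c A. b \<in> label_set m \<longrightarrow> c \<in> label_set m \<longrightarrow> A \<in> sets borel \<longrightarrow>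
                measure P {\<omega>\<in>space P. X i \<omega> = b \<and> Wc i \<omega> = c \<and> Y i \<omega> \<in> A}
                  = (1 / 2 ^ m) * (1 / 2 ^ m) * (\<integral>y. indicator A y * p (mu b) y \<partial>lborel)"

sublocale bicm_random_coding \<subseteq> prob_space P
  by (rule P)

context bicm_random_coding
begin

lemma measurable_X [measurable]: "X i \<in> measurable P (count_space UNIV)"
  and measurable_Wc [measurable]: "Wc i \<in> measurable P (count_space UNIV)"
  and measurable_Y [measurable]: "Y i \<in> borel_measurable P"
  using measX measW measY by simp_all

lemma measurable_Wc_component [measurable]: "(\<lambda>\<omega>. Wc i \<omega> j) \<in> borel_measurable P"
  by (rule measurable_compose[OF measurable_Wc]) simp

lemma pred_X_mem [measurable]: "Measurable.pred P (\<lambda>\<omega>. X i \<omega> \<in> A)"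
  and pred_Wc_mem [measurable]: "Measurable.pred P (\<lambda>\<omega>. Wc i \<omega> \<in> A)"
  by (rule measurable_compose[OF measurable_X], simp, rule measurable_compose[OF measurable_Wc], simp)

definition output_mass :: "'y set \<Rightarrow> real" where
  "output_mass B = (\<Sum>b\<in>label_set m. \<integral>y. indicator B y * p (mu b) y \<partial>lborel)"

lemma output_mass_UNIV: "output_mass UNIV = 2 ^ m"
proof -
  have "(\<integral>y. p (mu b) y \<partial>lborel) = 1" if "b \<in> label_set m" for b
    using mu dens that by (auto simp: bij_betw_def)
  then show ?thesis
    by (simp add: output_mass_def card_label_set)
qed

lemma events_codeword_output:
  assumes [measurable]: "B \<in> sets borel"
  shows "{\<omega>\<in>space P. Wc i \<omega> \<in> C \<and> Y i \<omega> \<in> B} \<in> events"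
  by measurable

lemma prob_codeword_output_labelled:
  assumes B[measurable]: "B \<in> sets borel"
  shows "prob {\<omega>\<in>space P. Wc i \<omega> \<in> C \<and> Y i \<omega> \<in> B \<and> X i \<omega> \<in> label_set m \<and> Wc i \<omega> \<in> label_set m}
         = real (card (C \<inter> label_set m)) / 2 ^ m * (output_mass B / 2 ^ m)"
proof -
  define e where "e = (\<lambda>(b, c). {\<omega>\<in>space P. X i \<omega> = b \<and> Wc i \<omega> = c \<and> Y i \<omega> \<in> B})"
  have e: "e bc \<in> events" for bc
    unfolding e_def case_prod_unfold by measurable
  have "{\<omega>\<in>space P. Wc i \<omega> \<in> C \<and> Y i \<omega> \<in> B \<and> X i \<omega> \<in> label_set m \<and> Wc i \<omega> \<in> label_set m}
      = (\<Union>bc\<in>label_set m \<times> (C \<inter> label_set m). e bc)"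
    unfolding e_def by auto
  also have "prob \<dots> = (\<Sum>bc\<in>label_set m \<times> (C \<inter> label_set m). prob (e bc))"
    using e finite_label_set
    by (intro finite_measure_finite_Union) (auto simp: disjoint_family_on_def e_def)
  also have "\<dots> = (\<Sum>b\<in>label_set m. \<Sum>c\<in>C \<inter> label_set m.
      (1 / 2 ^ m) * (1 / 2 ^ m) * (\<integral>y. indicator B y * p (mu b) y \<partial>lborel))"
    using law B by (subst sum.cartesian_product) (auto intro!: sum.cong simp: e_def)
  also have "\<dots> = real (card (C \<inter> label_set m)) / 2 ^ m * (output_mass B / 2 ^ m)"
    by (simp add: output_mass_def sum_distrib_left sum_divide_distrib)
  finally show ?thesis .
qed

lemma AE_label_set: "AE \<omega> in P. X i \<omega> \<in> label_set m \<and> Wc i \<omega> \<in> label_set m"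
proof -
  have "prob {\<omega>\<in>space P. X i \<omega> \<in> label_set m \<and> Wc i \<omega> \<in> label_set m} = 1"
    using prob_codeword_output_labelled[of UNIV i UNIV] by (simp add: output_mass_UNIV card_label_set)
  then show ?thesis
    by (auto dest: AE_prob_1 elim: AE_mp)
qed

lemma prob_codeword_output:
  assumes B[measurable]: "B \<in> sets borel"
  shows "prob {\<omega>\<in>space P. Wc i \<omega> \<in> C \<and> Y i \<omega> \<in> B}
         = real (card (C \<inter> label_set m)) / 2 ^ m * (output_mass B / 2 ^ m)"
proof -
  have "prob {\<omega>\<in>space P. Wc i \<omega> \<in> C \<and> Y i \<omega> \<in> B} = prob
      {\<omega>\<in>space P. Wc i \<omega> \<in> C \<and> Y i \<omega> \<in> B \<and> X i \<omega> \<in> label_set m \<and> Wc i \<omega> \<in> label_set m}"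
    using AE_label_set[of i] by (intro finite_measure_eq_AE) (auto elim: AE_mp simp del: Int_iff)
  then show ?thesis
    using prob_codeword_output_labelled[OF B] by simp
qed

definition cylinder :: "nat \<Rightarrow> (nat \<Rightarrow> (nat \<Rightarrow> real) set) \<Rightarrow> (nat \<Rightarrow> 'y set) \<Rightarrow> 'w set" where
  "cylinder N C B = {\<omega>\<in>space P. \<forall>i\<in>{1..N}. Wc i \<omega> \<in> C i \<and> Y i \<omega> \<in> B i}"

lemma cylinder_Int: "cylinder N C B \<inter> cylinder N C' B' = cylinder N (\<lambda>i. C i \<inter> C' i) (\<lambda>i. B i \<inter> B' i)"
  unfolding cylinder_def by auto

lemma events_cylinder: "(\<And>i. i \<in> {1..N} \<Longrightarrow> B i \<in> sets borel) \<Longrightarrow> cylinder N C B \<in> events"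
  unfolding cylinder_def by (intro sets.sets_Collect_finite_All events_codeword_output) auto

lemma prob_cylinder:
  assumes N: "N \<ge> 1" and B: "\<And>i. i \<in> {1..N} \<Longrightarrow> B i \<in> sets borel"
  shows "prob (cylinder N C B)
    = (\<Prod>i=1..N. real (card (C i \<inter> label_set m)) / 2 ^ m * (output_mass (B i) / 2 ^ m))"
proof -
  define Z where "Z i \<omega> = (X i \<omega>, Wc i \<omega>, Y i \<omega>)" for i \<omega>
  define E where "E i = Z i -` (UNIV \<times> C i \<times> B i) \<inter> space P" for i
  have "indep_sets (\<lambda>i. {Z i -` A \<inter> space P | A.
      A \<in> sets (count_space UNIV \<Otimes>\<^sub>M count_space UNIV \<Otimes>\<^sub>M (borel :: 'y measure))}) UNIV"
    using indep unfolding indep_vars_def2 Z_def by simp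
  moreover have "E i \<in> {Z i -` A \<inter> space P | A.
      A \<in> sets (count_space UNIV \<Otimes>\<^sub>M count_space UNIV \<Otimes>\<^sub>M (borel :: 'y measure))}"
    if "i \<in> {1..N}" for i
  proof -
    have "UNIV \<times> C i \<times> B i \<in> sets (count_space UNIV \<Otimes>\<^sub>M count_space UNIV \<Otimes>\<^sub>M (borel :: 'y measure))"
      using B[OF that] by (intro pair_measureI) auto
    then show ?thesis
      unfolding E_def by blast
  qed
  ultimately have "prob (\<Inter>i\<in>{1..N}. E i) = (\<Prod>i=1..N. prob (E i))"
    using N by (intro indep_setsD) auto
  moreover have "(\<Inter>i\<in>{1..N}. E i) = cylinder N C B"
    using N by (auto simp: E_def Z_def cylinder_def)
  moreover have "E i = {\<omega>\<in>space P. Wc i \<omega> \<in> C i \<and> Y i \<omega> \<in> B i}" for i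
    by (auto simp: E_def Z_def)
  ultimately show ?thesis
    using B prob_codeword_output by simp
qed

definition output_events :: "nat \<Rightarrow> 'w set set" where
  "output_events N = sigma_sets (space P)
     {cylinder N (\<lambda>_. UNIV) B | B. \<forall>i\<in>{1..N}. B i \<in> sets borel}"

definition codeword_events :: "nat \<Rightarrow> 'w set set" where
  "codeword_events N = sigma_sets (space P) {cylinder N C (\<lambda>_. UNIV) | C. True}"

lemma indep_set_output_codeword_events:
  assumes N: "N \<ge> 1"
  shows "indep_set (output_events N) (codeword_events N)"
  unfolding output_events_def codeword_events_def
proof (rule indep_set_sigma_sets)
  show "indep_set {cylinder N (\<lambda>_. UNIV) B | B. \<forall>i\<in>{1..N}. B i \<in> sets borel}
      {cylinder N C (\<lambda>_. UNIV) | C. True}"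
  proof (rule indep_setI)
    fix a b
    assume "a \<in> {cylinder N (\<lambda>_. UNIV) B | B. \<forall>i\<in>{1..N}. B i \<in> sets borel}"
      and "b \<in> {cylinder N C (\<lambda>_. UNIV) | C. True}"
    then obtain B C where B: "\<forall>i\<in>{1..N}. B i \<in> sets borel"
      and a: "a = cylinder N (\<lambda>_. UNIV) B" and b: "b = cylinder N C (\<lambda>_. UNIV)"
      by auto
    have "prob b = (\<Prod>i=1..N. real (card (C i \<inter> label_set m)) / 2 ^ m)"
      using N by (simp add: b prob_cylinder output_mass_UNIV)
    moreover have "prob a = (\<Prod>i=1..N. output_mass (B i) / 2 ^ m)"
      using B prob_cylinder[OF N, of B "\<lambda>_. UNIV"] by (simp add: a card_label_set)
    moreover have "prob (a \<inter> b)
        = (\<Prod>i=1..N. real (card (C i \<inter> label_set m)) / 2 ^ m * (output_mass (B i) / 2 ^ m))"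
      using B prob_cylinder[OF N, of B C] by (simp add: a b cylinder_Int)
    ultimately show "prob (a \<inter> b) = prob a * prob b"
      by (simp only: prod.distrib) (rule mult.commute)
  qed (auto intro: events_cylinder)
  show "Int_stable {cylinder N (\<lambda>_. UNIV) B | B. \<forall>i\<in>{1..N}. B i \<in> sets borel}"
    unfolding Int_stable_def
  proof safe
    fix B B' :: "nat \<Rightarrow> 'y set"
    assume "\<forall>i\<in>{1..N}. B i \<in> sets borel" "\<forall>i\<in>{1..N}. B' i \<in> sets borel"
    then show "\<exists>B''. cylinder N (\<lambda>_. UNIV) B \<inter> cylinder N (\<lambda>_. UNIV) B' = cylinder N (\<lambda>_. UNIV) B''
        \<and> (\<forall>i\<in>{1..N}. B'' i \<in> sets borel)"
      by (intro exI[of _ "\<lambda>i. B i \<inter> B' i"]) (auto simp: cylinder_Int)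
  qed
  show "Int_stable {cylinder N C (\<lambda>_. UNIV) | C. True}"
    by (auto simp: Int_stable_def cylinder_Int)
qed

definition llr_algebra :: "nat \<Rightarrow> 'w measure" where
  "llr_algebra N = sigma (space P)
     {(\<lambda>\<omega>. llr m mu S p j (Y i \<omega>)) -` A \<inter> space P | i j A.
        i \<in> {1..N} \<and> j \<in> {1..m} \<and> A \<in> sets borel}"

lemma space_llr_algebra [simp]: "space (llr_algebra N) = space P"
  by (simp add: llr_algebra_def space_measure_of_conv)

lemma sets_llr_algebra_subset: "sets (llr_algebra N) \<subseteq> output_events N"
  unfolding llr_algebra_def output_events_def
proof (subst sets_measure_of, blast, rule sigma_sets_mono, safe)
  fix i j and A :: "real set"
  assume "i \<in> {1..N}" "j \<in> {1..m}" "A \<in> sets borel"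
  then have "(\<lambda>\<omega>. llr m mu S p j (Y i \<omega>)) -` A \<inter> space P
      = cylinder N (\<lambda>_. UNIV) (\<lambda>i'. if i' = i then llr m mu S p j -` A else UNIV)"
    by (auto simp: cylinder_def)
  moreover have "llr m mu S p j -` A \<in> sets borel"
    using measurable_sets[OF measurable_llr \<open>A \<in> sets borel\<close>] by simp
  ultimately show "(\<lambda>\<omega>. llr m mu S p j (Y i \<omega>)) -` A \<inter> space P
      \<in> sigma_sets (space P) {cylinder N (\<lambda>_. UNIV) B | B. \<forall>i\<in>{1..N}. B i \<in> sets borel}"
    by (intro sigma_sets.Basic) auto
qed

lemma subalgebra_llr_algebra: "subalgebra P (llr_algebra N)"
proof -
  have "output_events N \<subseteq> events"
    unfolding output_events_def using events_cylinder by (intro sets.sigma_sets_subset) auto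
  then show ?thesis
    using sets_llr_algebra_subset unfolding subalgebra_def by auto
qed

lemma measurable_llr_algebra:
  assumes "i \<in> {1..N}" "j \<in> {1..m}"
  shows "(\<lambda>\<omega>. llr m mu S p j (Y i \<omega>)) \<in> borel_measurable (llr_algebra N)"
proof (rule measurableI)
  fix A :: "real set"
  assume "A \<in> sets borel"
  then have "(\<lambda>\<omega>. llr m mu S p j (Y i \<omega>)) -` A \<inter> space P
      \<in> sigma_sets (space P) {(\<lambda>\<omega>. llr m mu S p j (Y i \<omega>)) -` A \<inter> space P | i j A.
          i \<in> {1..N} \<and> j \<in> {1..m} \<and> A \<in> sets borel}"
    using assms by (intro sigma_sets.Basic) blast
  then show "(\<lambda>\<omega>. llr m mu S p j (Y i \<omega>)) -` A \<inter> space (llr_algebra N) \<in> sets (llr_algebra N)"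
    unfolding space_llr_algebra unfolding llr_algebra_def by (subst sets_measure_of) auto
qed simp

definition tilted_metric :: "real \<Rightarrow> nat \<Rightarrow> (nat \<Rightarrow> nat \<Rightarrow> real) \<Rightarrow> 'w \<Rightarrow> real" where
  "tilted_metric \<theta> N z \<omega> =
     exp (real N * \<theta> * orbgrand_metric m (Psibar m mu S p) N (\<lambda>i j. llr m mu S p j (Y i \<omega>)) z)"

lemma measurable_tilted_metric: "tilted_metric \<theta> N z \<in> borel_measurable (llr_algebra N)"
proof -
  have "(\<lambda>\<omega>. orbgrand_metric m (Psibar m mu S p) N (\<lambda>i j. llr m mu S p j (Y i \<omega>)) ((\<lambda>_. z) \<omega>))
      \<in> borel_measurable (llr_algebra N)"
    by (rule borel_measurable_orbgrand_metric) (simp_all add: measurable_llr_algebra)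
  then show ?thesis
    unfolding tilted_metric_def[abs_def] by measurable
qed

lemma tilted_metric_bounds:
  assumes "\<theta> \<le> 0"
  shows "0 \<le> tilted_metric \<theta> N z \<omega>" "tilted_metric \<theta> N z \<omega> \<le> 1"
proof -
  have "real N * \<theta> \<le> 0"
    using assms by (simp add: mult_nonneg_nonpos)
  then have "real N * \<theta> * orbgrand_metric m (Psibar m mu S p) N (\<lambda>i j. llr m mu S p j (Y i \<omega>)) z \<le> 0"
    using orbgrand_metric_nonneg[OF Psibar_bij] by (rule mult_nonpos_nonneg)
  then show "0 \<le> tilted_metric \<theta> N z \<omega>" "tilted_metric \<theta> N z \<omega> \<le> 1"
    by (simp_all add: tilted_metric_def)
qed

definition codeword_event :: "nat \<Rightarrow> (nat \<Rightarrow> nat \<Rightarrow> real) \<Rightarrow> 'w set" where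
  "codeword_event N z = {\<omega>\<in>space P. \<forall>i\<in>{1..N}. Wc i \<omega> = z i}"

lemma codeword_event_eq_cylinder: "codeword_event N z = cylinder N (\<lambda>i. {z i}) (\<lambda>_. UNIV)"
  by (auto simp: codeword_event_def cylinder_def)

lemma events_codeword_event: "codeword_event N z \<in> events"
  unfolding codeword_event_eq_cylinder by (rule events_cylinder) simp

lemma prob_codeword_event:
  assumes "N \<ge> 1" "z \<in> PiE {1..N} (\<lambda>_. label_set m)"
  shows "prob (codeword_event N z) = 1 / 2 ^ (N * m)"
proof -
  have "prob (codeword_event N z) = (\<Prod>i=1..N. 1 / 2 ^ m)"
    unfolding codeword_event_eq_cylinder using assms
    by (simp add: prob_cylinder output_mass_UNIV PiE_iff Int_absorb2)
  moreover have "(2::real) ^ (N * m) = (2 ^ m) ^ N"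
    by (simp add: mult.commute flip: power_mult)
  ultimately show ?thesis
    by (simp add: power_one_over)
qed

lemma prob_Int_codeword_event:
  assumes "N \<ge> 1" "A \<in> sets (llr_algebra N)"
  shows "prob (A \<inter> codeword_event N z) = prob A * prob (codeword_event N z)"
proof (rule indep_setD[OF indep_set_output_codeword_events])
  show "A \<in> output_events N"
    using assms sets_llr_algebra_subset by blast
  show "codeword_event N z \<in> codeword_events N"
    unfolding codeword_event_eq_cylinder codeword_events_def by (intro sigma_sets.Basic) blast
qed fact

lemma AE_tilted_metric_eq_sum_codeword_events:
  "AE \<omega> in P. tilted_metric \<theta> N (\<lambda>i j. Wc i \<omega> j) \<omega>
     = (\<Sum>z\<in>PiE {1..N} (\<lambda>_. label_set m). tilted_metric \<theta> N z \<omega> * indicator (codeword_event N z) \<omega>)"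
proof -
  have "AE \<omega> in P. \<forall>i\<in>{1..N}. Wc i \<omega> \<in> label_set m"
    using AE_label_set by (subst AE_finite_all) (auto elim: AE_mp)
  then show ?thesis
  proof (rule AE_mp, intro AE_I2 impI)
    fix \<omega> assume \<omega>: "\<omega> \<in> space P" and W: "\<forall>i\<in>{1..N}. Wc i \<omega> \<in> label_set m"
    define w where "w = restrict (\<lambda>i. Wc i \<omega>) {1..N}"
    have w: "w \<in> PiE {1..N} (\<lambda>_. label_set m)"
      using W by (simp add: w_def)
    have mem: "\<omega> \<in> codeword_event N z \<longleftrightarrow> z = w" if z: "z \<in> PiE {1..N} (\<lambda>_. label_set m)" for z
    proof
      assume "\<omega> \<in> codeword_event N z"
      then show "z = w"
        using z w by (intro PiE_ext[of z "{1..N}" "\<lambda>_. label_set m" w]) (auto simp: codeword_event_def w_def)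
    qed (use \<omega> in \<open>simp add: codeword_event_def w_def\<close>)
    have "(\<Sum>z\<in>PiE {1..N} (\<lambda>_. label_set m). tilted_metric \<theta> N z \<omega> * indicator (codeword_event N z) \<omega>)
        = (\<Sum>z\<in>PiE {1..N} (\<lambda>_. label_set m). if z = w then tilted_metric \<theta> N z \<omega> else 0)"
      by (intro sum.cong refl) (simp add: mem indicator_def)
    also have "\<dots> = tilted_metric \<theta> N w \<omega>"
      using w finite_label_set by (simp add: sum.delta finite_PiE)
    also have "\<dots> = tilted_metric \<theta> N (\<lambda>i j. Wc i \<omega> j) \<omega>"
      unfolding tilted_metric_def w_def by (intro arg_cong[where f=exp] arg_cong2[where f="(*)"] refl orbgrand_metric_cong) simp
    finally show "tilted_metric \<theta> N (\<lambda>i j. Wc i \<omega> j) \<omega>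
        = (\<Sum>z\<in>PiE {1..N} (\<lambda>_. label_set m). tilted_metric \<theta> N z \<omega> * indicator (codeword_event N z) \<omega>)" ..
  qed
qed

lemma measurable_tilted_metric_codeword:
  "(\<lambda>\<omega>. tilted_metric \<theta> N (\<lambda>i j. Wc i \<omega> j) \<omega>) \<in> borel_measurable P"
proof -
  have "(\<lambda>\<omega>. orbgrand_metric m (Psibar m mu S p) N (\<lambda>i j. llr m mu S p j (Y i \<omega>)) (\<lambda>i j. Wc i \<omega> j))
      \<in> borel_measurable P"
    by (rule borel_measurable_orbgrand_metric) measurable
  then show ?thesis
    unfolding tilted_metric_def by measurable
qed

lemma cond_mgf_eq_average:
  assumes "m \<ge> 1" "N \<ge> 1"
  shows "cond_mgf \<theta> N = (\<Sum>z\<in>PiE {1..N} (\<lambda>_. label_set m). tilted_metric \<theta> N z \<omega>) / 2 ^ (N * m)"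
  using sum_exp_orbgrand_metric[OF assms, of \<theta> "Psibar m mu S p"]
  by (simp add: cond_mgf_def tilted_metric_def prod_dividef)

lemma AE_real_cond_exp_tilted_metric:
  assumes \<theta>: "\<theta> \<le> 0" and N: "N \<ge> 1"
  shows "AE \<omega> in P. real_cond_exp P (llr_algebra N) (\<lambda>\<omega>. tilted_metric \<theta> N (\<lambda>i j. Wc i \<omega> j) \<omega>) \<omega>
    = cond_mgf \<theta> N"
proof -
  interpret sigma_finite_subalgebra P "llr_algebra N"
    by (rule sigma_finite_subalgebra_of_subalgebra[OF subalgebra_llr_algebra])
  let ?Z = "PiE {1..N} (\<lambda>_. label_set m)"
  have [measurable]: "tilted_metric \<theta> N z \<in> borel_measurable P" for z
    using measurable_from_subalg[OF subalgebra_llr_algebra measurable_tilted_metric] .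
  have codeword_sum: "AE \<omega> in P. real_cond_exp P (llr_algebra N) (\<lambda>\<omega>. tilted_metric \<theta> N (\<lambda>i j. Wc i \<omega> j) \<omega>) \<omega>
      = real_cond_exp P (llr_algebra N)
          (\<lambda>\<omega>. \<Sum>z\<in>?Z. tilted_metric \<theta> N z \<omega> * indicator (codeword_event N z) \<omega>) \<omega>"
    using AE_tilted_metric_eq_sum_codeword_events measurable_tilted_metric_codeword events_codeword_event
    by (intro real_cond_exp_cong) simp_all
  moreover have indep_sum: "AE \<omega> in P. real_cond_exp P (llr_algebra N)
      (\<lambda>\<omega>. \<Sum>z\<in>?Z. tilted_metric \<theta> N z \<omega> * indicator (codeword_event N z) \<omega>) \<omega>
      = (\<Sum>z\<in>?Z. tilted_metric \<theta> N z \<omega> * prob (codeword_event N z))"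
    using tilted_metric_bounds[OF \<theta>]
    by (intro real_cond_exp_sum_indep_events[where B=1] subalgebra_llr_algebra events_codeword_event
        prob_Int_codeword_event[OF N] measurable_tilted_metric)
       (simp_all add: finite_PiE finite_label_set abs_le_iff)
  moreover have "(\<Sum>z\<in>?Z. tilted_metric \<theta> N z \<omega> * prob (codeword_event N z)) = cond_mgf \<theta> N" for \<omega>
    using m N by (simp add: prob_codeword_event cond_mgf_eq_average[of N \<theta> \<omega>] sum_divide_distrib)
  ultimately show ?thesis
    by (auto elim: AE_mp[OF AE_conjI[OF codeword_sum indep_sum]])
qed

theorem AE_cond_mgf_limit:
  assumes \<theta>: "\<theta> \<le> 0"
  shows "AE \<omega> in P.
    (\<lambda>N. ln (real_cond_exp P (llr_algebra N) (\<lambda>\<omega>. tilted_metric \<theta> N (\<lambda>i j. Wc i \<omega> j) \<omega>) \<omega>) / real N)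
    \<longlonglongrightarrow> (\<Sum>j=1..m. \<integral>y. bit_density j y * ln (1 + exp (\<theta> / real m * \<bar>llr m mu S p j y\<bar>)) \<partial>lborel)
        - real m * ln 2"
proof -
  have "AE \<omega> in P. \<forall>N. 1 \<le> N \<longrightarrow>
      real_cond_exp P (llr_algebra N) (\<lambda>\<omega>. tilted_metric \<theta> N (\<lambda>i j. Wc i \<omega> j) \<omega>) \<omega> = cond_mgf \<theta> N"
  proof (subst AE_all_countable, intro allI)
    fix N :: nat
    show "AE \<omega> in P. 1 \<le> N \<longrightarrow>
        real_cond_exp P (llr_algebra N) (\<lambda>\<omega>. tilted_metric \<theta> N (\<lambda>i j. Wc i \<omega> j) \<omega>) \<omega> = cond_mgf \<theta> N"
      using AE_real_cond_exp_tilted_metric[OF \<theta>, of N] by (cases "1 \<le> N") (auto elim: AE_mp)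
  qed
  then show ?thesis
  proof eventually_elim
    case (elim \<omega>)
    then have "\<forall>\<^sub>F N in sequentially. ln (cond_mgf \<theta> N) / real N = ln (real_cond_exp P (llr_algebra N)
        (\<lambda>\<omega>. tilted_metric \<theta> N (\<lambda>i j. Wc i \<omega> j) \<omega>) \<omega>) / real N"
      by (auto intro: eventually_mono[OF eventually_ge_at_top[of 1]])
    with cond_mgf_limit[OF \<theta>] show ?case
      by (rule Lim_transform_eventually)
  qed
qed

end

(* For theta < 0 every integrand involved is bounded. *)
theorem lemma6:
  fixes m :: nat and S :: "'s set" and mu :: "(nat \<Rightarrow> real) \<Rightarrow> 's"
    and p :: "'s \<Rightarrow> 'y::euclidean_space \<Rightarrow> real"
    and P :: "'w measure"
    and X :: "nat \<Rightarrow> 'w \<Rightarrow> (nat \<Rightarrow> real)"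
    and Wc :: "nat \<Rightarrow> 'w \<Rightarrow> (nat \<Rightarrow> real)"
    and Y :: "nat \<Rightarrow> 'w \<Rightarrow> 'y"
    and \<theta> :: real
  assumes m: "m \<ge> 1"
    and mu: "bij_betw mu (label_set m) S"
    and dens: "\<forall>s\<in>S. (\<forall>y. 0 \<le> p s y) \<and> integrable lborel (p s) \<and> (\<integral>y. p s y \<partial>lborel) = 1"
    and A1: "\<forall>j\<in>{1..m}. \<exists>M1>0. \<exists>a>0. \<exists>S1 :: real poly. \<forall>y. norm y > M1 \<longrightarrow>
               qbit m mu S p j 1 y < poly S1 (norm y) * exp (- a * norm y) \<and>
               qbit m mu S p j (-1) y < poly S1 (norm y) * exp (- a * norm y)"
    and A2: "\<forall>j\<in>{1..m}. \<exists>M2>0. \<exists>S2 :: real poly. \<forall>y. norm y > M2 \<longrightarrow>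
               \<bar>llr m mu S p j y\<bar> < poly S2 (norm y)"
    and A3j: "\<forall>j\<in>{1..m}. A3 (Psi m mu S p j)"
    and A3bar: "A3 (Psibar m mu S p)"
    and P: "prob_space P"
    and measX: "\<forall>i. X i \<in> measurable P (count_space UNIV)"
    and measW: "\<forall>i. Wc i \<in> measurable P (count_space UNIV)"
    and measY: "\<forall>i. Y i \<in> borel_measurable P"
    and indep: "prob_space.indep_vars P
                  (\<lambda>_. count_space UNIV \<Otimes>\<^sub>M count_space UNIV \<Otimes>\<^sub>M borel)
                  (\<lambda>i \<omega>. (X i \<omega>, Wc i \<omega>, Y i \<omega>)) UNIV"
    and law: "\<forall>i b c A. b \<in> label_set m \<longrightarrow> c \<in> label_set m \<longrightarrow> A \<in> sets borel \<longrightarrow>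
                measure P {\<omega>\<in>space P. X i \<omega> = b \<and> Wc i \<omega> = c \<and> Y i \<omega> \<in> A}
                  = (1 / 2 ^ m) * (1 / 2 ^ m) * (\<integral>y. indicator A y * p (mu b) y \<partial>lborel)"
    and \<theta>: "\<theta> < 0"
  shows "AE \<omega> in P.
           (\<lambda>N. ln (real_cond_exp P
                    (sigma (space P)
                       {(\<lambda>\<omega>'. llr m mu S p j (Y i \<omega>')) -` A \<inter> space P | i j A.
                          i \<in> {1..N} \<and> j \<in> {1..m} \<and> A \<in> sets borel})
                    (\<lambda>\<omega>'. exp (real N * \<theta> *
                        orbgrand_metric m (Psibar m mu S p) N
                          (\<lambda>i j. llr m mu S p j (Y i \<omega>')) (\<lambda>i j. Wc i \<omega>' j)))
                    \<omega>) / real N)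
           \<longlonglongrightarrow>
           (\<Sum>j=1..m. (\<integral>y. (qbit m mu S p j 1 y + qbit m mu S p j (-1) y) / 2
                             * ln (1 + exp (\<theta> / real m * \<bar>llr m mu S p j y\<bar>)) \<partial>lborel))
             - real m * ln 2"
proof -
  have "bij_betw (Psibar m mu S p) (cdf_core (Psibar m mu S p)) {0<..<1}"
    using A3bar by (simp add: A3_def)
  then interpret bicm_random_coding m S mu p P X Wc Y
    using m mu dens P measX measW measY indep law
    by (intro bicm_random_coding.intro bicm_random_coding_axioms.intro bicm_channel.intro)
  from AE_cond_mgf_limit[OF less_imp_le[OF \<theta>]] show ?thesis
    unfolding llr_algebra_def tilted_metric_def bit_density_def .
qed

end
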